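(* Let $(b_k)_{k\ge 1}$ and $(d_k)_{k\ge 1}$ be the real coefficients for which $$\left(1+\frac{1}{x}\right)^x = e\left(1-\sum_{k=1}^{\infty}\frac{b_k}{(1+x)^k}\right) = e\left(1-\sum_{k=1}^{\infty}\frac{d_k}{\left(x+\tfrac{11}{12}\right)^k}\right),\qquad x>0,$$ and for each integer $m\ge 1$ and real $x>0$ define the partial sums $$\sigma_m(x):=\sum_{k=1}^{m}\frac{b_k}{(1+x)^k},\qquad S_m(x):=\sum_{k=1}^{m}\frac{d_k}{\left(x+\tfrac{11}{12}\right)^k}.$$ Then $S_m(x)>\sigma_m(x)$ for all real $x>0$ and all integers $m\ge 1$.
   Context: Explicitly, the coefficients are given as follows. Let $g:[0,1]\to\mathbb{R}$ be $g(s)=\frac{1}{\pi}s^s(1-s)^{1-s}\sin(\pi s)$ for $0<s<1$ and $g(0)=g(1)=0$. Then $b_1=\tfrac12$ and $b_{n+1}=\frac{1}{n+1}\left(\frac{1}{n+2}-\sum_{j=1}^{n}\frac{b_j}{n+2-j}\right)$ for $n\ge1$; equivalently $e\,b_k=\int_0^1 g(s)s^{k-2}\,ds$ for $k\ge 2$ (so $b_2=\tfrac1{24}$, $b_3=\tfrac1{48}$, $b_4=\tfrac{73}{5670}$). Also $d_1=\tfrac12$ and $d_n=\frac{1}{12^{n-1}e}\left((-1)^{n-1}+\int_0^1\frac{(12t-1)^{n-1}}{t}g(t)\,dt\right)$ for $n\ge 2$ (so $d_2=0$, $d_3=\tfrac{5}{288}$, $d_4=\tfrac{139}{17280}$). Here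 $e$ is Euler's number. *)

theory Defs
  imports "HOL-Analysis.Analysis"
begin

definition gfun :: "real \<Rightarrow> real" where
  "gfun s = (if 0 < s \<and> s < 1
     then (1/pi) * s powr s * (1 - s) powr (1 - s) * sin (pi * s) else 0)"

fun bcoef :: "nat \<Rightarrow> real" where
  "bcoef 0 = 0"
| "bcoef (Suc 0) = 1/2"
| "bcoef (Suc (Suc n)) =
     (1 / real (n + 2)) * (1 / real (n + 3)
       - (\<Sum>j\<in>{1..n+1}. bcoef j / (real (n + 3) - real j)))"

definition dcoef :: "nat \<Rightarrow> real" where
  "dcoef n = (if n = 0 then 0 else if n = 1 then 1/2 else
     (1 / (12 ^ (n - 1) * exp 1)) *
       ((-1) ^ (n - 1) + integral {0..1} (\<lambda>t. (12 * t - 1) ^ (n - 1) / t * gfun t)))"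

end

theory Submission
  imports Defs "HOL-Complex_Analysis.Complex_Analysis" "HOL-Real_Asymp.Real_Asymp"
begin

text \<open>Put \<open>u = 1/(1 + x)\<close>. The recurrence defining \<open>b\<close> says that
  \<open>P(u) = 1 - b\<^sub>1 u - b\<^sub>2 u^2 - ...\<close> solves \<open>P' = - P A'\<close> with
  \<open>A(u) = 1 - (1 - 1/u) log(1 - u)\<close>, so \<open>P = exp (- A)\<close> and \<open>e z P(1/z)\<close> is
  \<open>Phi z = z^z (z - 1)^(1 - z)\<close>. Integrating \<open>z^k Phi z\<close> over the boundary of a large upper
  half disc, on whose diameter \<open>Im Phi = pi g\<close>, gives the moments
  \<open>e b\<^sub>k\<^sub>+\<^sub>2 = integral of g(t) t^k over [0,1]\<close>; together with \<open>b\<^sub>1 + b\<^sub>2 + ... = 1 - 1/e\<close>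
  this gives \<open>integral of g(t)/t = e/2 - 1\<close>. Hence \<open>e b\<^sub>k\<close> and \<open>e d\<^sub>k\<close> are the values at
  \<open>t^(k-1)\<close> and \<open>(t - 1/12)^(k-1)\<close> of the positive functional
  \<open>L q = q 0 + integral of q(t) g(t)/t\<close>, and with \<open>y = 1 + x\<close> one finds
  \<open>e (S\<^sub>m - sigma\<^sub>m) = L Q / (12 y (y - 1/12))\<close>, where \<open>Q = (a^m - b^m)/(a - b)\<close>,
  \<open>a = t/y\<close>, \<open>b = (t - 1/12)/(y - 1/12)\<close>. For odd \<open>m\<close>, \<open>Q \<ge> 0\<close> on \<open>[0,1]\<close> and
  \<open>Q 0 > 0\<close>; for \<open>m = 2\<close>, \<open>L Q = e/(24 y)\<close>; for even \<open>m \<ge> 4\<close> the negative part of \<open>Q\<close>,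
  confined to \<open>[0, 1/12]\<close> and geometrically small, is outweighed by the contribution of
  \<open>[1/2, 3/4]\<close>, where \<open>g(t)/t \<ge> 7/160\<close>.\<close>

section \<open>The generating function of the coefficients b\<close>

lemma abs_bcoef_le_half: "1 \<le> n \<Longrightarrow> \<bar>bcoef n\<bar> \<le> 1/2"
proof (induction n rule: less_induct)
  case (less n)
  show ?case
  proof (cases "n = 1")
    case True then show ?thesis by simp
  next
    case False
    then obtain m where n: "n = Suc (Suc m)"
      using less.prems by (metis One_nat_def Suc_le_D le_SucE not0_implies_Suc)
    define S where "S = (\<Sum>j\<in>{1..m+1}. bcoef j / (real (m + 3) - real j))"
    have term_le: "\<bar>bcoef j / (real (m + 3) - real j)\<bar> \<le> 1/4" if j: "j \<in> {1..m+1}" for j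
    proof -
      have "\<bar>bcoef j\<bar> \<le> 1/2" using less.IH[of j] j n by auto
      moreover have "real (m + 3) - real j \<ge> 2" using j by auto
      ultimately show ?thesis by (simp add: abs_divide pos_divide_le_eq)
    qed
    have "\<bar>S\<bar> \<le> (\<Sum>j\<in>{1..m+1}. 1/4)"
      unfolding S_def by (rule order_trans[OF sum_abs]) (rule sum_mono[OF term_le])
    then have "\<bar>S\<bar> \<le> (real m + 1) / 4" by simp
    moreover have "1 / real (m + 3) \<le> 1/3" by (simp add: divide_le_eq)
    moreover have "\<bar>1 / real (m + 3) - S\<bar> \<le> 1 / real (m + 3) + \<bar>S\<bar>"
      using abs_triangle_ineq4[of "1 / real (m + 3)" S] by simp
    ultimately have "\<bar>1 / real (m + 3) - S\<bar> \<le> 1/3 + (real m + 1) / 4" by linarith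
    also have "\<dots> \<le> (real m + 2) / 2" by (simp add: field_simps)
    finally have "\<bar>1 / real (m + 3) - S\<bar> \<le> (real m + 2) / 2" .
    moreover have "bcoef n = (1 / real (m + 2)) * (1 / real (m + 3) - S)"
      unfolding n S_def by (rule bcoef.simps(3))
    ultimately show ?thesis by (simp add: abs_mult divide_le_eq)
  qed
qed

text \<open>The coefficients of \<open>P(u) = 1 - b\<^sub>1 u - b\<^sub>2 u^2 - ...\<close>, which at \<open>u = 1/(1 + x)\<close> equals
  \<open>(1 + 1/x)^x / e\<close>.\<close>

definition pcoef :: "nat \<Rightarrow> real" where
  "pcoef n = (if n = 0 then 1 else - bcoef n)"

lemma abs_pcoef_le_1: "\<bar>pcoef n\<bar> \<le> 1"
  using abs_bcoef_le_half[of n] by (auto simp: pcoef_def)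

lemma pcoef_recurrence:
  "real (Suc n) * pcoef (Suc n) = - (\<Sum>i\<le>n. pcoef i / (real n + 2 - real i))"
proof (cases n)
  case 0 then show ?thesis by (simp add: pcoef_def)
next
  case (Suc k)
  define S where "S = (\<Sum>j\<in>{1..k+1}. bcoef j / (real (k + 3) - real j))"
  have "(\<Sum>i\<le>n. pcoef i / (real n + 2 - real i))
      = pcoef 0 / (real n + 2) + (\<Sum>i\<le>k. pcoef (Suc i) / (real n + 2 - real (Suc i)))"
    unfolding Suc by (subst sum.atMost_Suc_shift) simp
  also have "(\<Sum>i\<le>k. pcoef (Suc i) / (real n + 2 - real (Suc i))) = - S"
  proof -
    have "S = (\<Sum>i\<in>{0..k}. bcoef (Suc i) / (real (k + 3) - real (Suc i)))"
      unfolding S_def by (subst sum.shift_bounds_cl_Suc_ivl[symmetric]) simp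
    then show ?thesis by (simp add: Suc pcoef_def atLeast0AtMost sum_negf[symmetric])
  qed
  finally have "(\<Sum>i\<le>n. pcoef i / (real n + 2 - real i)) = 1 / (real k + 3) - S"
    by (simp add: pcoef_def Suc)
  moreover have "pcoef (Suc n) = - (1 / real (k + 2)) * (1 / real (k + 3) - S)"
    unfolding S_def by (simp add: pcoef_def Suc del: bcoef.simps(1,2))
  then have "real (Suc n) * pcoef (Suc n) = - (1 / real (k + 3) - S)"
    by (simp add: Suc del: of_nat_Suc)
  ultimately show ?thesis by simp
qed

definition P_fps :: "complex fps" where
  "P_fps = Abs_fps (\<lambda>n. of_real (pcoef n))"

definition A_fps :: "complex fps" where
  "A_fps = Abs_fps (\<lambda>n. if n = 0 then 0 else 1 / (of_nat n * of_nat (n + 1)))"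

lemma fps_deriv_A_fps: "fps_deriv A_fps = Abs_fps (\<lambda>n. 1 / of_nat (n + 2))"
proof (rule fps_ext)
  fix n
  have nz: "(of_nat n + 1 :: complex) \<noteq> 0"
    by (metis of_nat_Suc of_nat_eq_0_iff nat.distinct(1) add.commute)
  have "fps_deriv A_fps $ n = (of_nat n + 1) * (1 / ((of_nat n + 1) * (of_nat n + 2)))"
    by (simp add: A_fps_def fps_deriv_nth add_ac)
  also have "\<dots> = 1 / (of_nat n + 2)"
    by (simp only: times_divide_eq_right nonzero_mult_divide_mult_cancel_left[OF nz])
  finally show "fps_deriv A_fps $ n = Abs_fps (\<lambda>n. 1 / of_nat (n + 2)) $ n"
    by (simp add: add_ac)
qed

lemma fps_deriv_P_fps: "fps_deriv P_fps = - (P_fps * fps_deriv A_fps)"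
proof (rule fps_ext)
  fix n
  have "fps_deriv P_fps $ n = of_real (real (Suc n) * pcoef (Suc n))"
    by (simp add: P_fps_def fps_deriv_nth)
  also have "\<dots> = - (\<Sum>i\<le>n. of_real (pcoef i) / of_real (real n + 2 - real i))"
    by (simp only: pcoef_recurrence of_real_minus of_real_sum of_real_divide)
  also have "\<dots> = - (\<Sum>i=0..n. of_real (pcoef i) * (1 / of_nat (n - i + 2)))"
    unfolding atLeast0AtMost
  proof (intro arg_cong[where f=uminus] sum.cong refl)
    fix i assume "i \<in> {..n}"
    then have "real n + 2 - real i = real (n - i + 2)" by (simp add: of_nat_diff)
    then show "of_real (pcoef i) / of_real (real n + 2 - real i)
        = of_real (pcoef i) * (1 / (of_nat (n - i + 2) :: complex))"
      by (metis divide_inverse mult_1 of_real_of_nat_eq)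
  qed
  also have "\<dots> = (- (P_fps * fps_deriv A_fps)) $ n"
    by (simp add: fps_mult_nth P_fps_def fps_deriv_A_fps)
  finally show "fps_deriv P_fps $ n = (- (P_fps * fps_deriv A_fps)) $ n" .
qed

lemma fps_conv_radius_ge_1_if_bounded:
  fixes f :: "'a :: {banach, real_normed_div_algebra} fps"
  assumes "\<And>n. norm (f $ n) \<le> C"
  shows "1 \<le> fps_conv_radius f"
  unfolding fps_conv_radius_def
proof (rule conv_radius_geI_ex')
  fix r :: real assume r: "0 < r" "ereal r < 1"
  show "summable (\<lambda>n. f $ n * of_real r ^ n)"
  proof (rule summable_norm_cancel, rule summable_comparison_test'[of "\<lambda>n. C * r ^ n"])
    show "summable (\<lambda>n. C * r ^ n)" using r by (intro summable_mult summable_geometric) simp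
    fix n show "norm (norm (f $ n * of_real r ^ n)) \<le> C * r ^ n"
      using assms[of n] r by (simp add: norm_mult norm_power mult_right_mono)
  qed
qed

lemma fps_conv_radius_P_fps: "1 \<le> fps_conv_radius P_fps"
  by (rule fps_conv_radius_ge_1_if_bounded[of _ 1]) (simp add: P_fps_def abs_pcoef_le_1)

lemma fps_conv_radius_A_fps: "1 \<le> fps_conv_radius A_fps"
proof (rule fps_conv_radius_ge_1_if_bounded[of _ 1])
  fix n
  have "1 \<le> real n * real (n + 1)" if "n \<noteq> 0"
  proof -
    have "1 \<le> n * (n + 1)" using that by simp
    then show ?thesis by (metis of_nat_1 of_nat_le_iff of_nat_mult)
  qed
  then show "norm (A_fps $ n) \<le> 1"
    by (auto simp: A_fps_def norm_divide norm_mult simp del: of_nat_Suc)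
qed

lemma norm_less_fps_conv_radius:
  "norm u < 1 \<Longrightarrow> 1 \<le> fps_conv_radius F \<Longrightarrow> ereal (norm u) < fps_conv_radius F"
  by (meson ereal_less(3) less_eq_ereal_def less_le_trans)

lemma eval_P_fps_eq_exp:
  assumes "norm u < 1"
  shows "eval_fps P_fps u = exp (- eval_fps A_fps u)"
proof -
  define F where "F = (\<lambda>u. eval_fps P_fps u * exp (eval_fps A_fps u))"
  have "\<exists>c. \<forall>x\<in>ball 0 1. F x = c"
  proof (rule has_field_derivative_zero_constant)
    fix x :: complex assume "x \<in> ball 0 1"
    then have "norm x < 1" by simp
    then have rP: "ereal (norm x) < fps_conv_radius P_fps"
      and rA: "ereal (norm x) < fps_conv_radius A_fps"
      and rA': "ereal (norm x) < fps_conv_radius (fps_deriv A_fps)"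
      using fps_conv_radius_P_fps fps_conv_radius_A_fps
        order.trans[OF fps_conv_radius_A_fps fps_conv_radius_deriv]
      by (auto intro: norm_less_fps_conv_radius)
    have "ereal (norm x) < min (fps_conv_radius P_fps) (fps_conv_radius (fps_deriv A_fps))"
      using rP rA' by simp
    then have "ereal (norm x) < fps_conv_radius (P_fps * fps_deriv A_fps)"
      using fps_conv_radius_mult by (rule less_le_trans)
    then have "eval_fps (fps_deriv P_fps) x = - (eval_fps P_fps x * eval_fps (fps_deriv A_fps) x)"
      using rP rA' by (simp only: fps_deriv_P_fps eval_fps_minus eval_fps_mult)
    moreover have "(F has_field_derivative (eval_fps (fps_deriv P_fps) x * exp (eval_fps A_fps x)
        + exp (eval_fps A_fps x) * eval_fps (fps_deriv A_fps) x * eval_fps P_fps x)) (at x within ball 0 1)"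
      unfolding F_def
      by (intro DERIV_mult DERIV_chain2[OF DERIV_exp] has_field_derivative_eval_fps rP rA)
    ultimately show "(F has_field_derivative 0) (at x within ball 0 1)" by (simp add: algebra_simps)
  qed simp
  then obtain c where c: "\<And>x. x \<in> ball 0 1 \<Longrightarrow> F x = c" by blast
  have "F 0 = 1" by (simp add: F_def eval_fps_at_0 P_fps_def A_fps_def pcoef_def)
  then have "F u = 1" using c[of 0] c[of u] assms by simp
  then show ?thesis unfolding F_def by (simp add: exp_minus field_simps)
qed

lemma eval_A_fps:
  assumes "norm u < 1" "u \<noteq> 0"
  shows "eval_fps A_fps u = 1 - (1 - 1/u) * Ln (1 - u)"
proof -
  define L where "L = Ln (1 - u)"
  have "(\<lambda>n. - (u ^ n) / of_nat n) sums L"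
    using Ln_series'[of "-u"] assms unfolding L_def by simp
  then have s1: "(\<lambda>n. u ^ n / of_nat n) sums (- L)"
    using sums_minus by fastforce
  then have "(\<lambda>n. u ^ Suc n / of_nat (Suc n)) sums (- L)"
    by (subst sums_Suc_iff) simp
  then have "(\<lambda>n. (1/u) * (u ^ Suc n / of_nat (Suc n))) sums ((1/u) * (- L))"
    by (rule sums_mult)
  then have s2: "(\<lambda>n. u ^ n / of_nat (Suc n)) sums (- L / u)"
    using assms(2) by (simp add: field_simps)
  have "(\<lambda>n. (u ^ n / of_nat n - u ^ n / of_nat (Suc n)) + (if n = 0 then 1 else 0))
      sums (- L - (- L / u) + 1)"
    by (intro sums_add sums_diff s1 s2) (rule sums_single[of 0 "\<lambda>_. 1::complex", simplified])
  moreover have "A_fps $ n * u ^ n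
      = (u ^ n / of_nat n - u ^ n / of_nat (Suc n)) + (if n = 0 then 1 else 0)" for n
  proof (cases "n = 0")
    case False
    have "(of_nat (Suc n) :: complex) \<noteq> 0" by (metis Suc_neq_Zero of_nat_eq_0_iff)
    with False show ?thesis
      by (simp add: A_fps_def field_simps del: of_nat_Suc) (simp add: algebra_simps)
  qed (simp add: A_fps_def)
  ultimately have "(\<lambda>n. A_fps $ n * u ^ n) sums (- L - (- L / u) + 1)" by simp
  then have "eval_fps A_fps u = - L - (- L / u) + 1"
    unfolding eval_fps_def by (rule sums_unique[symmetric])
  then show ?thesis unfolding L_def using assms(2) by (simp add: field_simps)
qed

lemma norm_eval_P_fps_minus_partial_sum_le:
  assumes "norm u \<le> 1/2"
  shows "norm (eval_fps P_fps u - (\<Sum>n<N. of_real (pcoef n) * u ^ n)) \<le> 2 * norm u ^ N"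
proof -
  define T where "T = (\<lambda>i. of_real (pcoef (i + N)) * u ^ (i + N))"
  have nu: "norm u < 1" using assms by simp
  have "(\<lambda>n. P_fps $ n * u ^ n) sums eval_fps P_fps u"
    by (rule sums_eval_fps[OF norm_less_fps_conv_radius[OF nu fps_conv_radius_P_fps]])
  then have "(\<lambda>n. of_real (pcoef n) * u ^ n) sums eval_fps P_fps u" by (simp add: P_fps_def)
  then have T: "T sums (eval_fps P_fps u - (\<Sum>n<N. of_real (pcoef n) * u ^ n))"
    unfolding T_def by (rule sums_split_initial_segment)
  have norm_T: "norm (T i) \<le> norm u ^ N * norm u ^ i" for i
    using mult_right_mono[OF abs_pcoef_le_1, of "norm u ^ (i + N)"]
    by (simp add: T_def norm_mult norm_power power_add mult.commute)
  have geom: "(\<lambda>i. norm u ^ N * norm u ^ i) sums (norm u ^ N * (1 / (1 - norm u)))"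
    by (rule sums_mult[OF geometric_sums]) (simp add: nu)
  have summable_T: "summable (\<lambda>i. norm (T i))"
    by (rule summable_comparison_test'[OF sums_summable[OF geom]]) (use norm_T in simp)
  have "norm (suminf T) \<le> (\<Sum>i. norm (T i))" by (rule summable_norm[OF summable_T])
  also have "\<dots> \<le> (\<Sum>i. norm u ^ N * norm u ^ i)"
    by (rule suminf_le[OF norm_T summable_T sums_summable[OF geom]])
  also have "\<dots> = norm u ^ N * (1 / (1 - norm u))" by (rule sums_unique[OF geom, symmetric])
  also have "\<dots> \<le> norm u ^ N * 2"
    using assms by (intro mult_left_mono) (simp_all add: divide_le_eq)
  finally show ?thesis using sums_unique[OF T] by (simp add: mult.commute)
qed

section \<open>The function Phi and its boundary values\<close>

text \<open>\<open>Phi z = z^z (z - 1)^(1 - z) = z (1 + 1/(z - 1))^(z - 1)\<close> continues \<open>(1 + x) (1 + 1/x)^x\<close>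
  from \<open>z = 1 + x > 1\<close> to the closed upper half plane.\<close>

definition Phi :: "complex \<Rightarrow> complex" where
  "Phi z = exp (z * Ln z + (1 - z) * Ln (z - 1))"

lemma Ln_eq_Arg2pi_upper_half:
  assumes "0 \<le> Im z" "z \<noteq> 0"
  shows "Ln z = of_real (ln (norm z)) + \<i> * of_real (Arg2pi z)"
proof -
  have nonneg: "0 \<le> Im (Ln z)" using assms Arg_eq_Im_Ln[OF assms(2)] Arg_less_0[of z] by simp
  have le_pi: "Im (Ln z) \<le> pi" by (rule Im_Ln_le_pi[OF assms(2)])
  have "Arg2pi (exp (Ln z)) = Im (Ln z)"
    by (rule Arg2pi_exp) (use nonneg le_pi pi_gt_zero in linarith)+
  then have "Arg2pi z = Im (Ln z)" using assms(2) by simp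
  then show ?thesis using assms(2) by (simp add: complex_eq_iff)
qed

lemma continuous_on_Ln_upper_half: "continuous_on ({z. 0 \<le> Im z} - {0}) Ln"
proof -
  have "continuous_on ({z. 0 \<le> Im z} - {0}) (\<lambda>z. of_real (ln (norm z)) + \<i> * of_real (Arg2pi z))"
    by (intro continuous_intros continuous_on_compose2[OF continuous_on_upperhalf_Arg2pi]) auto
  then show ?thesis by (rule continuous_on_eq) (auto simp: Ln_eq_Arg2pi_upper_half)
qed

lemma norm_mult_Ln_le:
  assumes "norm z < 1"
  shows "norm (z * Ln z) \<le> 2 * sqrt (norm z) + pi * norm z"
proof (cases "z = 0")
  case False
  define r where "r = norm z"
  have r: "0 < r" "r < 1" using False assms by (auto simp: r_def)
  have "norm (Ln z) \<le> \<bar>Re (Ln z)\<bar> + \<bar>Im (Ln z)\<bar>" by (rule cmod_le)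
  also have "\<bar>Im (Ln z)\<bar> \<le> pi" using mpi_less_Im_Ln[OF False] Im_Ln_le_pi[OF False] by auto
  also have "\<bar>Re (Ln z)\<bar> = - ln r" using False r by (simp add: r_def)
  finally have "norm (Ln z) \<le> - ln r + pi" by simp
  then have "r * norm (Ln z) \<le> r * (- ln r + pi)" using r by (intro mult_left_mono) auto
  then have "norm (z * Ln z) \<le> r * (- ln r) + pi * r"
    by (simp add: norm_mult r_def algebra_simps)
  moreover have "r * (- ln r) \<le> 2 * sqrt r"
  proof -
    have "ln (1 / sqrt r) \<le> 1 / sqrt r - 1" using r by (intro ln_le_minus_one) simp
    moreover have "ln (1 / sqrt r) = - ln r / 2" using r by (simp add: ln_div ln_sqrt)
    ultimately have "- ln r \<le> 2 / sqrt r" by (simp add: field_simps)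
    then have "r * (- ln r) \<le> r * (2 / sqrt r)" using r by (intro mult_left_mono) auto
    also have "r * (2 / sqrt r) = 2 * sqrt r" using r by (simp add: field_simps real_sqrt_mult[symmetric])
    finally show ?thesis .
  qed
  ultimately show ?thesis by (simp add: r_def)
qed simp

lemma continuous_on_mult_Ln_upper_half: "continuous_on {z. 0 \<le> Im z} (\<lambda>z. z * Ln z)"
  unfolding continuous_on_eq_continuous_within
proof
  fix x assume x: "x \<in> {z. 0 \<le> Im z}"
  show "continuous (at x within {z. 0 \<le> Im z}) (\<lambda>z. z * Ln z)"
  proof (cases "x = 0")
    case True
    have "((\<lambda>z. z * Ln z) \<longlongrightarrow> 0) (at 0)"
    proof (rule Lim_null_comparison)
      show "\<forall>\<^sub>F z in at 0. norm (z * Ln z) \<le> 2 * sqrt (norm z) + pi * norm z"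
        unfolding eventually_at by (intro exI[of _ 1]) (auto simp: dist_norm intro!: norm_mult_Ln_le)
      have "((\<lambda>z::complex. 2 * sqrt (norm z) + pi * norm z)
          \<longlongrightarrow> 2 * sqrt (norm (0::complex)) + pi * norm (0::complex)) (at 0)"
        by (intro tendsto_intros)
      then show "((\<lambda>z::complex. 2 * sqrt (norm z) + pi * norm z) \<longlongrightarrow> 0) (at 0)" by simp
    qed
    then have "isCont (\<lambda>z. z * Ln z) 0" by (simp add: isCont_def)
    then show ?thesis using True continuous_at_imp_continuous_within by blast
  next
    case False
    have "continuous (at x within ({z. 0 \<le> Im z} - {0})) Ln"
      using continuous_on_Ln_upper_half x False by (simp add: continuous_on_eq_continuous_within)
    moreover have "at x within ({z. 0 \<le> Im z} - {0}) = at x within {z. 0 \<le> Im z}"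
      by (rule at_within_nhd[of x "-{0}"]) (use False in auto)
    ultimately have "continuous (at x within {z. 0 \<le> Im z}) Ln" by simp
    then show ?thesis by (rule continuous_mult[OF continuous_ident])
  qed
qed

lemma continuous_on_Phi: "continuous_on {z. 0 \<le> Im z} Phi"
proof -
  have "continuous_on {z. 0 \<le> Im z} (\<lambda>z. (z - 1) * Ln (z - 1))"
    by (rule continuous_on_compose2[OF continuous_on_mult_Ln_upper_half, of _ "\<lambda>z. z - 1"])
      (auto intro: continuous_intros)
  then have "continuous_on {z. 0 \<le> Im z} (\<lambda>z. exp (z * Ln z - (z - 1) * Ln (z - 1)))"
    by (intro continuous_on_exp continuous_on_diff continuous_on_mult_Ln_upper_half)
  moreover have "(\<lambda>z. exp (z * Ln z - (z - 1) * Ln (z - 1))) = Phi"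
    by (auto simp: Phi_def algebra_simps)
  ultimately show ?thesis by metis
qed

lemma Phi_holomorphic: "Phi holomorphic_on {z. 0 < Im z}"
proof -
  have "(\<lambda>z. exp (z * Ln z + (1 - z) * Ln (z - 1))) holomorphic_on {z. 0 < Im z}"
    by (intro holomorphic_intros) (auto simp: complex_nonpos_Reals_iff)
  then show ?thesis by (simp add: Phi_def[abs_def])
qed

lemma Im_Phi_of_real: "Im (Phi (of_real s)) = pi * gfun s"
proof -
  consider "s < 0" | "s = 0" | "0 < s \<and> s < 1" | "s = 1" | "s > 1" by linarith
  then show ?thesis
  proof cases
    case 1
    have "Ln (of_real s) = of_real (ln (- s)) + \<i> * pi" using 1 by (simp add: Ln_of_real')
    moreover have "Ln (of_real s - 1) = of_real (ln (1 - s)) + \<i> * pi"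
      using Ln_of_real'[of "s - 1"] 1 by simp
    ultimately have "Im (of_real s * Ln (of_real s) + (1 - of_real s) * Ln (of_real s - 1)) = pi"
      by (simp add: algebra_simps)
    then show ?thesis using 1 by (simp add: Phi_def Im_exp gfun_def)
  next
    case 3
    have "Ln (of_real s) = of_real (ln s)" using 3 by (simp add: Ln_of_real)
    moreover have "Ln (of_real s - 1) = of_real (ln (1 - s)) + \<i> * pi"
      using Ln_of_real'[of "s - 1"] 3 by simp
    ultimately have E: "of_real s * Ln (of_real s) + (1 - of_real s) * Ln (of_real s - 1)
       = of_real (s * ln s + (1 - s) * ln (1 - s)) + \<i> * of_real ((1 - s) * pi)"
      by (simp add: algebra_simps)
    have "exp (s * ln s + (1 - s) * ln (1 - s)) = s powr s * (1 - s) powr (1 - s)"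
      using 3 by (simp add: powr_def exp_add)
    moreover have "sin ((1 - s) * pi) = sin (pi * s)"
      by (metis mult.commute sin_pi_minus right_diff_distrib' mult_1)
    ultimately show ?thesis using 3 by (simp add: Phi_def E Im_exp gfun_def)
  next
    case 5
    have "Ln (of_real s) = of_real (ln s)" using 5 by (simp add: Ln_of_real)
    moreover have "Ln (of_real s - 1) = of_real (ln (s - 1))"
      using Ln_of_real[of "s - 1"] 5 by simp
    ultimately show ?thesis using 5 by (simp add: Phi_def Im_exp gfun_def)
  qed (simp_all add: Phi_def gfun_def)
qed

lemma continuous_on_gfun [continuous_intros]: "continuous_on S gfun"
proof -
  have "continuous_on S (\<lambda>s. Im (Phi (of_real s)) / pi)"
    by (intro continuous_intros continuous_on_compose2[OF continuous_on_Phi]) auto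
  then show ?thesis by (simp add: Im_Phi_of_real)
qed

lemma Ln_diff_1_upper_half:
  assumes "0 \<le> Im z" "1 < norm z"
  shows "Ln (z - 1) = Ln z + Ln (1 - 1 / z)"
proof -
  define u where "u = 1 / z"
  have z0: "z \<noteq> 0" and z1: "z - 1 \<noteq> 0" using assms by auto
  have nu: "norm u < 1" using assms by (simp add: u_def norm_divide divide_less_eq)
  have zu: "z - 1 = z * (1 - u)" using z0 by (simp add: u_def field_simps)
  have nz1: "1 - u \<noteq> 0" using nu by auto
  define s where "s = Ln z + Ln (1 - u)"
  have a1: "0 \<le> Im (Ln z)" using assms(1) Arg_eq_Im_Ln[OF z0] Arg_less_0[of z] by simp
  have a2: "Im (Ln z) \<le> pi" by (rule Im_Ln_le_pi[OF z0])
  have "Re u \<le> norm u" by (rule complex_Re_le_cmod)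
  then have "0 < Re (1 - u)" using nu by simp
  then have b1: "\<bar>Im (Ln (1 - u))\<bar> < pi / 2" by (rule Re_Ln_pos_lt_imp)
  have "Im u \<le> 0" using assms(1) by (simp add: u_def Im_divide)
  then have b2: "0 \<le> Im (Ln (1 - u))" using Arg_eq_Im_Ln[OF nz1] Arg_less_0[of "1 - u"] by simp
  have c1: "0 \<le> Im (Ln (z - 1))" using assms(1) Arg_eq_Im_Ln[OF z1] Arg_less_0[of "z - 1"] by simp
  have sle: "Im s \<le> pi"
  proof (rule ccontr)
    assume "\<not> Im s \<le> pi"
    then have gt: "pi < Im s" by simp
    then have "\<not> Im s \<le> - pi" using pi_gt_zero by linarith
    then have "Ln (z - 1) = s - \<i> * of_real (2 * pi)"
      using Ln_times[OF z0 nz1] gt unfolding zu s_def by (simp add: if_split)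
    then have "Im (Ln (z - 1)) = Im s - 2 * pi" by simp
    moreover have "Im s < 3 * pi / 2" using a2 b1 by (simp add: s_def)
    ultimately show False using c1 pi_gt_zero by simp
  qed
  have "Im s = Im (Ln z) + Im (Ln (1 - u))" by (simp add: s_def)
  then have sge: "- pi < Im s" using a1 b2 pi_gt_zero by linarith
  show ?thesis using Ln_times[OF z0 nz1] sle sge unfolding zu s_def u_def by auto
qed

lemma Phi_eq_exp_mult_eval_P_fps:
  assumes "0 \<le> Im z" "2 \<le> norm z"
  shows "Phi z = of_real (exp 1) * z * eval_fps P_fps (1 / z)"
proof -
  define u where "u = 1 / z"
  have z0: "z \<noteq> 0" using assms by auto
  have nu: "norm u < 1" and u0: "u \<noteq> 0"
    using assms by (auto simp: u_def norm_divide divide_less_eq)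
  have "z * Ln z + (1 - z) * Ln (z - 1) = Ln z + (1 - 1/u) * Ln (1 - u)"
    using Ln_diff_1_upper_half[of z] assms by (simp add: u_def algebra_simps)
  also have "(1 - 1/u) * Ln (1 - u) = 1 - eval_fps A_fps u" using eval_A_fps[OF nu u0] by simp
  finally have E: "z * Ln z + (1 - z) * Ln (z - 1) = Ln z + 1 + (- eval_fps A_fps u)" by simp
  have "Phi z = exp (Ln z) * exp 1 * exp (- eval_fps A_fps u)"
    by (simp only: Phi_def E exp_add)
  also have "exp (- eval_fps A_fps u) = eval_fps P_fps u" by (rule eval_P_fps_eq_exp[OF nu, symmetric])
  also have "exp (Ln z) = z" using z0 by simp
  also have "(exp 1 :: complex) = of_real (exp 1)" by (simp add: exp_of_real[symmetric])
  finally show ?thesis by (simp add: u_def)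
qed

section \<open>The moments of g\<close>

lemma path_image_upper_semicircle:
  assumes "0 \<le> R"
  shows "path_image (part_circlepath 0 R 0 pi) \<subseteq> {z. norm z = R \<and> 0 \<le> Im z}"
proof
  fix w assume "w \<in> path_image (part_circlepath 0 R 0 pi)"
  then obtain t where t: "t \<in> closed_segment 0 pi" "w = 0 + of_real R * cis t"
    unfolding path_image_part_circlepath' by auto
  then have "0 \<le> sin t" by (intro sin_ge_zero) (auto simp: closed_segment_eq_real_ivl)
  then show "w \<in> {z. norm z = R \<and> 0 \<le> Im z}" using t assms by (simp add: norm_mult)
qed

lemma has_contour_integral_upper_semicircle:
  fixes f :: "complex \<Rightarrow> complex"
  assumes cf: "continuous_on {z. 0 \<le> Im z} f"
      and hf: "f holomorphic_on {z. 0 < Im z}"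
      and R: "0 < R"
  shows "(f has_contour_integral (- integral {-R..R} (\<lambda>x. f (of_real x)))) (part_circlepath 0 R 0 pi)"
proof -
  define S where "S = {z::complex. 0 \<le> Im z}"
  define g1 where "g1 = linepath (- of_real R) (of_real R :: complex)"
  define g2 where "g2 = part_circlepath 0 R 0 pi"
  have convS: "convex S" unfolding S_def by (rule convex_halfspace_Im_ge)
  have intS: "interior S = {z. 0 < Im z}"
    using interior_halfspace_ge[of \<i> 0] unfolding S_def by simp
  have p1: "path_image g1 \<subseteq> S"
    unfolding g1_def path_image_linepath by (rule closed_segment_subset[OF _ _ convS]) (auto simp: S_def)
  have p2: "path_image g2 \<subseteq> S"
    using path_image_upper_semicircle[of R] R unfolding g2_def S_def by auto
  have v1: "valid_path g1" and v2: "valid_path g2" by (simp_all add: g1_def g2_def)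
  have e12: "pathfinish g1 = pathstart g2" by (simp add: g1_def g2_def)
  have e21: "pathfinish g2 = pathstart g1" by (simp add: g1_def g2_def exp_of_real)
  have "f contour_integrable_on g1" unfolding g1_def
    by (rule contour_integrable_continuous_linepath)
      (use continuous_on_subset[OF cf p1[unfolded S_def]] in \<open>simp add: g1_def\<close>)
  then obtain I1 where I1: "(f has_contour_integral I1) g1" unfolding contour_integrable_on_def by blast
  have "f contour_integrable_on g2" unfolding g2_def
    by (rule contour_integrable_continuous_part_circlepath)
      (use continuous_on_subset[OF cf p2[unfolded S_def]] in \<open>simp add: g2_def\<close>)
  then obtain I2 where I2: "(f has_contour_integral I2) g2" unfolding contour_integrable_on_def by blast
  have "(f has_contour_integral (I1 + I2)) (g1 +++ g2)"
    by (rule has_contour_integral_join[OF I1 I2 v1 v2])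
  moreover have "(f has_contour_integral 0) (g1 +++ g2)"
  proof (rule Cauchy_theorem_convex[where K = "{}"])
    show "\<And>x. x \<in> interior S - {} \<Longrightarrow> f field_differentiable at x"
      using hf intS by (auto intro: holomorphic_on_imp_differentiable_at simp: open_halfspace_Im_gt)
    show "path_image (g1 +++ g2) \<subseteq> S" using path_image_join[OF e12] p1 p2 by auto
  qed (use cf convS v1 v2 e12 e21 in \<open>simp_all add: S_def\<close>)
  ultimately have "I1 + I2 = 0" by (rule has_contour_integral_unique)
  moreover have "I1 = integral {-R..R} (\<lambda>x. f (of_real x))"
    using I1 R unfolding g1_def
    by (subst (asm) has_contour_integral_linepath_Reals_iff) (auto simp: integral_unique)
  ultimately have "I2 = - integral {-R..R} (\<lambda>x. f (of_real x))"
    by (simp add: eq_neg_iff_add_eq_0 add.commute)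
  then show ?thesis using I2 by (simp add: g2_def)
qed

lemma Im_integral_eq_integral_unit_interval:
  fixes f :: "real \<Rightarrow> complex"
  assumes R: "1 \<le> R" and cont: "continuous_on {-R..R} f"
    and vanish: "\<And>x. x \<notin> {0..1} \<Longrightarrow> Im (f x) = 0"
  shows "Im (integral {-R..R} f) = integral {0..1} (\<lambda>x. Im (f x))"
proof -
  have "(f has_integral integral {-R..R} f) {-R..R}"
    using cont by (intro integrable_integral integrable_continuous_interval)
  then have "((\<lambda>x. Im (f x)) has_integral Im (integral {-R..R} f)) {-R..R}"
    by (rule has_integral_Im)
  moreover have "continuous_on {0..1} f" using cont by (rule continuous_on_subset) (use R in auto)
  then have "((\<lambda>x. Im (f x)) has_integral integral {0..1} (\<lambda>x. Im (f x))) {0..1}"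
    by (intro integrable_integral integrable_continuous_interval continuous_intros)
  then have "((\<lambda>x. Im (f x)) has_integral integral {0..1} (\<lambda>x. Im (f x))) {-R..R}"
    by (rule has_integral_on_superset) (use R vanish in auto)
  ultimately show ?thesis by (rule has_integral_unique)
qed

lemma power_times_sum_inverse_powers:
  fixes z :: "'a :: field"
  assumes "z \<noteq> 0"
  shows "z ^ (k + 1) * (\<Sum>n<k+3. a n * (1 / z) ^ n)
       = (\<Sum>n\<le>k+1. a n * z ^ (k + 1 - n)) + a (k + 2) / z"
proof -
  have "{..<k+3} = insert (k+2) {..k+1}" by auto
  then have split: "(\<Sum>n<k+3. a n * (1 / z) ^ n)
      = (\<Sum>n\<le>k+1. a n * (1 / z) ^ n) + a (k+2) * (1 / z) ^ (k+2)"
    by (simp add: add.commute)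
  have "z ^ (k + 1) * (a n * (1 / z) ^ n) = a n * z ^ (k + 1 - n)" if "n \<le> k + 1" for n
  proof -
    have "z ^ (k + 1) = z ^ (k + 1 - n) * z ^ n" using that by (simp flip: power_add)
    moreover have "z ^ n * (1 / z) ^ n = 1" using assms by (simp flip: power_mult_distrib)
    ultimately show ?thesis by (simp add: algebra_simps)
  qed
  then have "z ^ (k + 1) * (\<Sum>n\<le>k+1. a n * (1 / z) ^ n) = (\<Sum>n\<le>k+1. a n * z ^ (k + 1 - n))"
    unfolding sum_distrib_left by (intro sum.cong) auto
  moreover have "z ^ (k + 1) * (a (k+2) * (1 / z) ^ (k+2)) = a (k + 2) / z"
    using assms by (simp add: field_simps)
  ultimately show ?thesis by (simp only: split distrib_left)
qed

lemma norm_Phi_minus_principal_part_le: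
  assumes "0 \<le> Im z" "2 \<le> norm z"
  shows "norm (z ^ k * Phi z - of_real (exp 1) * (\<Sum>n\<le>k+1. of_real (pcoef n) * z ^ (k + 1 - n))
           - of_real (exp 1) * of_real (pcoef (k + 2)) / z) \<le> 2 * exp 1 / norm z ^ 2"
proof -
  define E :: complex where "E = of_real (exp 1)"
  have z0: "z \<noteq> 0" using assms by auto
  have nu: "norm (1 / z) \<le> 1/2" using assms by (simp add: norm_divide divide_le_eq)
  have "E * z ^ (k + 1) * (eval_fps P_fps (1 / z) - (\<Sum>n<k+3. of_real (pcoef n) * (1 / z) ^ n))
      = E * z ^ (k + 1) * eval_fps P_fps (1 / z)
        - E * (z ^ (k + 1) * (\<Sum>n<k+3. of_real (pcoef n) * (1 / z) ^ n))"
    by (simp add: algebra_simps)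
  also have "\<dots> = z ^ k * Phi z - E * ((\<Sum>n\<le>k+1. of_real (pcoef n) * z ^ (k + 1 - n))
      + of_real (pcoef (k + 2)) / z)"
    using Phi_eq_exp_mult_eval_P_fps[OF assms]
    by (simp only: power_times_sum_inverse_powers[OF z0]) (simp add: E_def algebra_simps)
  finally have "z ^ k * Phi z - E * (\<Sum>n\<le>k+1. of_real (pcoef n) * z ^ (k + 1 - n))
      - E * of_real (pcoef (k + 2)) / z
      = E * z ^ (k + 1) * (eval_fps P_fps (1 / z) - (\<Sum>n<k+3. of_real (pcoef n) * (1 / z) ^ n))"
    by (simp add: algebra_simps)
  also have "norm \<dots> = exp 1 * norm z ^ (k + 1)
      * norm (eval_fps P_fps (1 / z) - (\<Sum>n<k+3. of_real (pcoef n) * (1 / z) ^ n))"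
    by (simp add: E_def norm_mult norm_power)
  also have "\<dots> \<le> exp 1 * norm z ^ (k + 1) * (2 * norm (1 / z) ^ (k + 3))"
    by (intro mult_left_mono norm_eval_P_fps_minus_partial_sum_le[OF nu]) simp
  also have "\<dots> = 2 * exp 1 / norm z ^ 2"
    using z0 by (simp add: norm_divide field_simps power_add power2_eq_square power3_eq_cube)
  finally show ?thesis by (simp add: E_def)
qed

lemma has_contour_integral_inverse_upper_semicircle:
  assumes "0 < R"
  shows "((\<lambda>z. c / z) has_contour_integral (of_real pi * c * \<i>)) (part_circlepath 0 R 0 pi)"
proof -
  have "((\<lambda>t. c * \<i>) has_integral (of_real pi * c * \<i>)) {0..pi}"
    using has_integral_const_real[of "c * \<i>" 0 pi] by (simp add: scaleR_conv_of_real mult.assoc)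
  moreover have eq: "(c / (0 + of_real R * cis t)) * of_real R * \<i> * cis t = c * \<i>" for t
    using assms by (simp add: field_simps cis_neq_zero)
  ultimately have "((\<lambda>t. (c / (0 + of_real R * cis t)) * of_real R * \<i> * cis t)
      has_integral (of_real pi * c * \<i>)) {0..pi}"
    by (simp only: eq)
  then show ?thesis by (subst has_contour_integral_part_circlepath_iff) (simp_all add: pi_gt_zero)
qed

lemma Im_integral_power_mult_Phi:
  assumes "1 \<le> R"
  shows "Im (integral {-R..R} (\<lambda>x. of_real x ^ k * Phi (of_real x)))
       = pi * integral {0..1} (\<lambda>t. gfun t * t ^ k)"
proof -
  have "Im (integral {-R..R} (\<lambda>x. of_real x ^ k * Phi (of_real x)))
      = integral {0..1} (\<lambda>x. Im (of_real x ^ k * Phi (of_real x)))"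
    using assms
    by (intro Im_integral_eq_integral_unit_interval continuous_intros
        continuous_on_compose2[OF continuous_on_Phi])
      (auto simp flip: of_real_power simp: Im_Phi_of_real gfun_def)
  also have "\<dots> = integral {0..1} (\<lambda>x. pi * (gfun x * x ^ k))"
    by (simp flip: of_real_power add: Im_Phi_of_real mult_ac)
  finally show ?thesis by simp
qed

lemma gfun_moment_estimate:
  assumes R: "2 \<le> R"
  shows "\<bar>integral {0..1} (\<lambda>t. gfun t * t ^ k) + exp 1 * pcoef (k + 2)\<bar> \<le> 2 * exp 1 / R"
proof -
  define E :: complex where "E = of_real (exp 1)"
  define f where "f = (\<lambda>z. z ^ k * Phi z)"
  define p where "p = (\<lambda>z. E * (\<Sum>n\<le>k+1. of_real (pcoef n) * z ^ (k + 1 - n)))"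
  define c where "c = E * of_real (pcoef (k + 2))"
  define If where "If = integral {-R..R} (\<lambda>x. f (of_real x))"
  define Ip where "Ip = integral {-R..R} (\<lambda>x. p (of_real x))"
  define arc where "arc = part_circlepath 0 R 0 pi"
  have R0: "0 < R" using R by simp
  have hp: "p holomorphic_on UNIV" unfolding p_def by (intro holomorphic_intros)
  have "(f has_contour_integral (- If)) arc"
    unfolding If_def arc_def f_def using R0
    by (intro has_contour_integral_upper_semicircle holomorphic_intros Phi_holomorphic
        continuous_intros continuous_on_Phi)
  moreover have "(p has_contour_integral (- Ip)) arc"
    unfolding Ip_def arc_def using R0 hp
    by (intro has_contour_integral_upper_semicircle holomorphic_on_imp_continuous_on)
      (auto intro: holomorphic_on_subset)
  moreover have "((\<lambda>z. c / z) has_contour_integral (of_real pi * c * \<i>)) arc"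
    unfolding arc_def using R0 by (rule has_contour_integral_inverse_upper_semicircle)
  ultimately have remainder:
    "((\<lambda>z. f z - p z - c / z) has_contour_integral (- If - (- Ip) - of_real pi * c * \<i>)) arc"
    by (intro has_contour_integral_diff)
  have "norm (f z - p z - c / z) \<le> 2 * exp 1 / R ^ 2" if "z \<in> path_image arc" for z
  proof -
    have "norm z = R" "0 \<le> Im z" using that path_image_upper_semicircle[of R] R0 by (auto simp: arc_def)
    then show ?thesis
      using norm_Phi_minus_principal_part_le[of z k] R by (simp add: f_def p_def c_def E_def)
  qed
  then have "norm (- If - (- Ip) - of_real pi * c * \<i>) \<le> (2 * exp 1 / R ^ 2) * R * (pi - 0)"
    using R0 by (intro has_contour_integral_bound_part_circlepath[OF remainder[unfolded arc_def]])
      (auto simp: arc_def)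
  also have "\<dots> = pi * (2 * exp 1 / R)" using R0 by (simp add: power2_eq_square field_simps)
  finally have bound: "norm (- If - (- Ip) - of_real pi * c * \<i>) \<le> pi * (2 * exp 1 / R)" .
  have "Im (p (of_real x)) = 0" for x
  proof -
    have "p (of_real x) = of_real (exp 1 * (\<Sum>n\<le>k+1. pcoef n * x ^ (k + 1 - n)))"
      by (simp add: p_def E_def)
    then show ?thesis by simp
  qed
  then have "Im Ip = 0"
    unfolding Ip_def using R holomorphic_on_imp_continuous_on[OF hp]
    by (subst Im_integral_eq_integral_unit_interval)
      (auto intro: continuous_on_compose2 continuous_intros)
  moreover have "Im If = pi * integral {0..1} (\<lambda>t. gfun t * t ^ k)"
    unfolding If_def f_def using R by (intro Im_integral_power_mult_Phi) simp
  ultimately have "Im (- If - (- Ip) - of_real pi * c * \<i>)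
      = - (pi * (integral {0..1} (\<lambda>t. gfun t * t ^ k) + exp 1 * pcoef (k + 2)))"
    by (simp add: c_def E_def algebra_simps)
  then have "pi * \<bar>integral {0..1} (\<lambda>t. gfun t * t ^ k) + exp 1 * pcoef (k + 2)\<bar>
      \<le> pi * (2 * exp 1 / R)"
    using abs_Im_le_cmod[of "- If - (- Ip) - of_real pi * c * \<i>"] bound by (simp add: abs_mult)
  then show ?thesis by (rule mult_left_le_imp_le) (rule pi_gt_zero)
qed

theorem gfun_moment: "((\<lambda>t. gfun t * t ^ k) has_integral (exp 1 * bcoef (k + 2))) {0..1}"
proof -
  define D where "D = \<bar>integral {0..1} (\<lambda>t. gfun t * t ^ k) + exp 1 * pcoef (k + 2)\<bar>"
  have "D \<le> 0"
  proof (rule tendsto_le[OF trivial_limit_at_top_linorder])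
    show "((\<lambda>R::real. 2 * exp 1 / R) \<longlongrightarrow> 0) at_top" by real_asymp
    show "\<forall>\<^sub>F R in at_top. D \<le> 2 * exp 1 / R"
      using eventually_ge_at_top[of "2::real"] unfolding D_def
      by eventually_elim (rule gfun_moment_estimate)
  qed simp
  then have "integral {0..1} (\<lambda>t. gfun t * t ^ k) = exp 1 * bcoef (k + 2)"
    by (simp add: D_def pcoef_def)
  moreover have "(\<lambda>t. gfun t * t ^ k) integrable_on {0..1}"
    by (intro integrable_continuous_interval continuous_intros)
  ultimately show ?thesis by (metis integrable_integral)
qed

section \<open>The total mass of g(t)/t\<close>

lemma gfun_nonneg: "0 \<le> gfun t"
proof (cases "0 < t \<and> t < 1")
  case True
  then have "0 \<le> sin (pi * t)" by (intro sin_ge_zero) auto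
  then show ?thesis using True by (simp add: gfun_def)
qed (auto simp: gfun_def)

lemma bcoef_nonneg: "0 \<le> bcoef n"
proof -
  consider "n = 0" | "n = 1" | k where "n = k + 2" by (metis add_2_eq_Suc' not0_implies_Suc One_nat_def)
  then show ?thesis
  proof cases
    case 3
    have "0 \<le> exp 1 * bcoef (k + 2)"
      by (rule has_integral_nonneg[OF gfun_moment]) (simp add: gfun_nonneg)
    then show ?thesis using 3 by (simp add: zero_le_mult_iff del: bcoef.simps)
  qed simp_all
qed

lemma bcoef_power_sums:
  assumes "0 < u" "u < 1"
  shows "(\<lambda>n. bcoef n * u ^ n) sums (1 - exp (- (1 - (1 - 1/u) * ln (1 - u))))"
proof -
  have nu: "norm (of_real u :: complex) < 1" and u0: "(of_real u :: complex) \<noteq> 0"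
    using assms by simp_all
  have "(\<lambda>n. P_fps $ n * of_real u ^ n) sums eval_fps P_fps (of_real u)"
    by (rule sums_eval_fps[OF norm_less_fps_conv_radius[OF nu fps_conv_radius_P_fps]])
  also have "eval_fps P_fps (of_real u) = exp (- eval_fps A_fps (of_real u))"
    by (rule eval_P_fps_eq_exp[OF nu])
  also have "eval_fps A_fps (of_real u) = 1 - (1 - 1 / of_real u) * Ln (1 - of_real u)"
    by (rule eval_A_fps[OF nu u0])
  also have "Ln (1 - of_real u) = of_real (ln (1 - u))" using assms Ln_of_real[of "1 - u"] by simp
  finally have "(\<lambda>n. of_real (pcoef n * u ^ n) :: complex)
      sums of_real (exp (- (1 - (1 - 1/u) * ln (1 - u))))"
    by (simp add: P_fps_def exp_of_real[symmetric])
  then have "(\<lambda>n. pcoef n * u ^ n) sums exp (- (1 - (1 - 1/u) * ln (1 - u)))"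
    by (simp only: sums_of_real_iff)
  moreover have "(\<lambda>n. if n = 0 then 1 else 0 :: real) sums 1"
    by (rule sums_single[of 0 "\<lambda>_. 1::real", simplified])
  ultimately have "(\<lambda>n. - (pcoef n * u ^ n) + (if n = 0 then 1 else 0))
      sums (- exp (- (1 - (1 - 1/u) * ln (1 - u))) + 1)"
    by (intro sums_add sums_minus)
  moreover have "(\<lambda>n. - (pcoef n * u ^ n) + (if n = 0 then 1 else 0)) = (\<lambda>n. bcoef n * u ^ n)"
    by (auto simp: pcoef_def)
  ultimately show ?thesis by simp
qed

lemma sums_of_nonneg_power_series_limit:
  fixes a :: "nat \<Rightarrow> real"
  assumes nonneg: "\<And>n. 0 \<le> a n"
    and sums: "\<And>u. 0 < u \<Longrightarrow> u < 1 \<Longrightarrow> (\<lambda>n. a n * u ^ n) sums f u"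
    and lim: "(f \<longlongrightarrow> L) (at_left 1)"
  shows "a sums L"
proof -
  have near_1: "\<forall>\<^sub>F u in at_left (1::real). 0 < u \<and> u < 1"
    by (rule eventually_at_leftI[of 0]) auto
  have partial_le: "(\<Sum>i<N. a i) \<le> L" for N
  proof (rule tendsto_le[OF trivial_limit_at_left_real lim])
    have "((\<lambda>u. \<Sum>i<N. a i * u ^ i) \<longlongrightarrow> (\<Sum>i<N. a i * 1 ^ i)) (at_left 1)"
      by (intro tendsto_intros)
    then show "((\<lambda>u. \<Sum>i<N. a i * u ^ i) \<longlongrightarrow> (\<Sum>i<N. a i)) (at_left 1)" by simp
    show "\<forall>\<^sub>F u in at_left 1. (\<Sum>i<N. a i * u ^ i) \<le> f u"
      using near_1
    proof eventually_elim
      case (elim u)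
      then show ?case
        using sum_le_suminf[OF sums_summable[OF sums], of u "{..<N}"] sums_unique[OF sums, of u] nonneg
        by auto
    qed
  qed
  have summable: "summable a" by (rule summableI_nonneg_bounded[OF nonneg partial_le])
  have "L \<le> suminf a"
  proof (rule tendsto_le[OF trivial_limit_at_left_real tendsto_const lim])
    show "\<forall>\<^sub>F u in at_left 1. f u \<le> suminf a"
      using near_1
    proof eventually_elim
      case (elim u)
      have "a n * u ^ n \<le> a n" for n
        using elim nonneg[of n] by (simp add: mult_left_le power_le_one)
      then have "suminf (\<lambda>n. a n * u ^ n) \<le> suminf a"
        using elim by (intro suminf_le sums_summable[OF sums] summable) auto
      then show ?case using sums_unique[OF sums] elim by simp
    qed
  qed
  then show ?thesis using suminf_le_const[OF summable partial_le] summable_sums[OF summable] by simp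
qed

lemma bcoef_sums: "bcoef sums (1 - exp (-1))"
proof (rule sums_of_nonneg_power_series_limit[OF bcoef_nonneg])
  show "(\<lambda>n. bcoef n * u ^ n) sums (1 - exp (- (1 - (1 - 1/u) * ln (1 - u))))"
    if "0 < u" "u < 1" for u
    using that by (rule bcoef_power_sums)
  have "((\<lambda>u. exp (- (1 - (1 - 1/u) * ln (1 - u)))) \<longlongrightarrow> exp (-1)) (at_left (1::real))"
    by real_asymp
  from tendsto_diff[OF tendsto_const this]
  show "((\<lambda>u::real. 1 - exp (- (1 - (1 - 1/u) * ln (1 - u)))) \<longlongrightarrow> 1 - exp (-1)) (at_left 1)" .
qed

lemma gfun_reflect: "gfun (1 - t) = gfun t"
proof -
  have "sin (pi * (1 - t)) = sin (pi * t)" by (simp add: right_diff_distrib sin_diff)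
  moreover have "(0 < 1 - t \<and> 1 - t < 1) = (0 < t \<and> t < 1)" by auto
  ultimately show ?thesis unfolding gfun_def by (simp add: mult_ac)
qed

lemma gfun_moment_reflected:
  "((\<lambda>t. gfun t * (1 - t) ^ k) has_integral (exp 1 * bcoef (k + 2))) {0..1}"
proof -
  have "((\<lambda>t. gfun t * t ^ k) has_integral (exp 1 * bcoef (k + 2))) (cbox 0 1)"
    using gfun_moment[of k] by (simp only: cbox_interval)
  from has_integral_affinity[OF this, of "-1" 1]
  have "((\<lambda>x. gfun (1 - x) * (1 - x) ^ k) has_integral (exp 1 * bcoef (k + 2)))
      ((\<lambda>x. 1 - x) ` {0..1})"
    by (simp add: cbox_interval)
  moreover have "(\<lambda>x::real. 1 - x) ` {0..1} = {0..1}"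
    using image_affinity_atLeastAtMost[of "-1" 1 0 "1::real"] by simp
  ultimately show ?thesis by (simp add: gfun_reflect)
qed

definition gweight :: "real \<Rightarrow> real" where
  "gweight t = gfun t / t"

lemma gweight_has_integral: "(gweight has_integral (exp 1 / 2 - 1)) {0..1}"
proof -
  define F where "F = (\<lambda>N t. gfun t * (\<Sum>i<N. (1 - t) ^ i))"
  have F_integral: "(F N has_integral (exp 1 * (\<Sum>i<N. bcoef (i + 2)))) {0..1}" for N
  proof -
    have "((\<lambda>t. \<Sum>i<N. gfun t * (1 - t) ^ i) has_integral (\<Sum>i<N. exp 1 * bcoef (i + 2))) {0..1}"
      by (intro has_integral_sum finite_lessThan gfun_moment_reflected)
    then show ?thesis by (simp add: F_def sum_distrib_left)
  qed
  have "(\<lambda>i. bcoef (i + 2)) sums (1/2 - exp (-1))"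
    using sums_split_initial_segment[OF bcoef_sums, of 2] by (simp add: numeral_2_eq_2)
  then have F_lim: "(\<lambda>N. integral {0..1} (F N)) \<longlonglongrightarrow> exp 1 * (1/2 - exp (-1))"
    using integral_unique[OF F_integral] by (simp add: sums_def tendsto_mult_left)
  have convergence: "(\<lambda>t. gfun t / t) integrable_on {0..1} \<and>
      (\<lambda>N. integral {0..1} (F N)) \<longlonglongrightarrow> integral {0..1} (\<lambda>t. gfun t / t)"
  proof (rule monotone_convergence_increasing)
    show "F N integrable_on {0..1}" for N using F_integral by blast
    show "F N t \<le> F (Suc N) t" if "t \<in> {0..1}" for N t
      using that gfun_nonneg[of t] by (simp add: F_def algebra_simps)
    show "(\<lambda>N. F N t) \<longlonglongrightarrow> gfun t / t" if "t \<in> {0..1}" for t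
    proof (cases "t = 0")
      case False
      then have "(\<lambda>i. (1 - t) ^ i) sums (1 / (1 - (1 - t)))"
        using that by (intro geometric_sums) auto
      then have "(\<lambda>N. \<Sum>i<N. (1 - t) ^ i) \<longlonglongrightarrow> 1 / t" by (simp add: sums_def)
      then have "(\<lambda>N. gfun t * (\<Sum>i<N. (1 - t) ^ i)) \<longlonglongrightarrow> gfun t * (1 / t)"
        by (rule tendsto_mult_left)
      then show ?thesis by (simp add: F_def)
    qed (simp add: F_def gfun_def)
    show "bounded (range (\<lambda>N. integral {0..1} (F N)))"
      using F_lim by (rule convergent_imp_bounded)
  qed
  then have "integral {0..1} (\<lambda>t. gfun t / t) = exp 1 / 2 - 1"
    using F_lim LIMSEQ_unique by (fastforce simp: right_diff_distrib exp_minus field_simps)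
  then show ?thesis
    using convergence unfolding gweight_def[abs_def] by (metis integrable_integral)
qed

section \<open>A functional whose moments are the coefficients\<close>

lemma gweight_nonneg: "0 \<le> gweight t"
proof (cases "0 < t")
  case False
  then have "gfun t = 0" by (simp add: gfun_def)
  then show ?thesis by (simp add: gweight_def)
qed (simp add: gweight_def gfun_nonneg)

lemma gfun_le_self:
  assumes "0 \<le> t"
  shows "gfun t \<le> t"
proof (cases "0 < t \<and> t < 1")
  case True
  have "t powr t \<le> 1" "(1 - t) powr (1 - t) \<le> 1" by (rule powr_le1; use True in auto)+
  moreover have "sin (pi * t) \<le> pi * t" by (rule sin_x_le_x) (use True in simp)
  moreover have "0 \<le> sin (pi * t)" by (rule sin_ge_zero) (use True in auto)
  ultimately have "t powr t * (1 - t) powr (1 - t) * sin (pi * t) \<le> 1 * 1 * (pi * t)"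
    by (intro mult_mono) auto
  then have "(1 / pi) * (t powr t * (1 - t) powr (1 - t) * sin (pi * t)) \<le> (1 / pi) * (pi * t)"
    by (intro mult_left_mono) auto
  then show ?thesis using True by (simp add: gfun_def mult.assoc)
qed (use assms in \<open>auto simp: gfun_def\<close>)

lemma gweight_le_1: "0 \<le> t \<Longrightarrow> gweight t \<le> 1"
  using gfun_le_self[of t] by (cases "t = 0") (auto simp: gweight_def divide_le_eq)

lemma gfun_ge:
  assumes t: "1/2 \<le> t" "t \<le> 3/4"
  shows "7/160 \<le> gfun t"
proof -
  have t0: "0 < t" "t < 1" using t by auto
  have "t powr 1 \<le> t powr t" by (rule powr_mono') (use t0 in auto)
  then have a: "1/2 \<le> t powr t" using t t0 by simp
  have "(1 - t) powr (1/2) \<le> (1 - t) powr (1 - t)" by (rule powr_mono') (use t in auto)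
  moreover have "(1 - t) powr (1/2) = sqrt (1 - t)" by (rule powr_half_sqrt) (use t in auto)
  moreover have "sqrt (1/4) \<le> sqrt (1 - t)" using t by simp
  moreover have "sqrt (1/4) = 1/2" by (simp add: real_sqrt_divide)
  ultimately have b: "1/2 \<le> (1 - t) powr (1 - t)" by linarith
  have "sin (pi / 4) \<le> sin (pi * (1 - t))"
    by (rule sin_monotone_2pi_le) (use t pi_gt_zero in \<open>auto simp: field_simps\<close>)
  moreover have "sin (pi * t) = sin (pi * (1 - t))" by (simp add: right_diff_distrib sin_diff)
  moreover have "7/5 \<le> sqrt 2" by (rule real_le_rsqrt) (simp add: power2_eq_square)
  ultimately have c: "7/10 \<le> sin (pi * t)" using sin_45 by linarith
  have p: "1/4 \<le> 1 / pi" using pi_less_4 pi_gt_zero by (simp add: divide_simps)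
  have "(1/4) * (1/2) * (1/2) * (7/10) \<le> (1 / pi) * t powr t * (1 - t) powr (1 - t) * sin (pi * t)"
    by (intro mult_mono p a b c) auto
  then show ?thesis using t0 by (simp add: gfun_def)
qed

lemma gweight_ge:
  assumes "1/2 \<le> t" "t \<le> 3/4"
  shows "7/160 \<le> gweight t"
proof -
  have "gfun t \<le> gfun t / t" using assms gfun_nonneg[of t] by (simp add: le_divide_eq mult_left_le)
  then show ?thesis using gfun_ge[OF assms] unfolding gweight_def by linarith
qed

lemma integrable_mult_gweight:
  assumes "continuous_on {0..1} q"
  shows "(\<lambda>t. q t * gweight t) integrable_on {0..1}"
proof -
  have "gweight absolutely_integrable_on {0..1}"
    using gweight_has_integral gweight_nonneg by (intro nonnegative_absolutely_integrable) auto
  moreover have "q \<in> borel_measurable (lebesgue_on {0..1})"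
    by (rule continuous_imp_measurable_on_sets_lebesgue[OF assms]) auto
  moreover have "bounded (q ` {0..1})"
    by (rule compact_imp_bounded, rule compact_continuous_image[OF assms]) auto
  ultimately have "(\<lambda>t. q t * gweight t) absolutely_integrable_on {0..1}"
    by (intro absolutely_integrable_bounded_measurable_product_real) auto
  then show ?thesis using absolutely_integrable_on_def by blast
qed

definition moment_functional :: "(real \<Rightarrow> real) \<Rightarrow> real" where
  "moment_functional q = q 0 + integral {0..1} (\<lambda>t. q t * gweight t)"

lemma moment_functional_cong:
  assumes "\<And>t. t \<in> {0..1} \<Longrightarrow> q t = r t"
  shows "moment_functional q = moment_functional r"
proof -
  have "integral {0..1} (\<lambda>t. q t * gweight t) = integral {0..1} (\<lambda>t. r t * gweight t)"
    by (rule integral_cong) (simp add: assms)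
  then show ?thesis using assms[of 0] by (simp add: moment_functional_def)
qed

lemma moment_functional_sum:
  assumes "\<And>k. k \<in> K \<Longrightarrow> continuous_on {0..1} (q k)"
  shows "moment_functional (\<lambda>t. \<Sum>k\<in>K. q k t) = (\<Sum>k\<in>K. moment_functional (q k))"
proof (cases "finite K")
  case True
  have "integral {0..1} (\<lambda>t. (\<Sum>k\<in>K. q k t) * gweight t)
      = (\<Sum>k\<in>K. integral {0..1} (\<lambda>t. q k t * gweight t))"
    unfolding sum_distrib_right by (intro integral_sum True integrable_mult_gweight assms)
  then show ?thesis by (simp add: moment_functional_def sum.distrib)
qed (simp add: moment_functional_def)

lemma moment_functional_cmult:
  "moment_functional (\<lambda>t. a * q t) = a * moment_functional q"
  by (simp add: moment_functional_def mult.assoc distrib_left)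

lemma moment_functional_divide:
  "moment_functional (\<lambda>t. q t / a) = moment_functional q / a"
  using moment_functional_cmult[of "1 / a" q] by simp

lemma moment_functional_diff:
  assumes "continuous_on {0..1} q" "continuous_on {0..1} r"
  shows "moment_functional (\<lambda>t. q t - r t) = moment_functional q - moment_functional r"
proof -
  have "integral {0..1} (\<lambda>t. (q t - r t) * gweight t)
      = integral {0..1} (\<lambda>t. q t * gweight t) - integral {0..1} (\<lambda>t. r t * gweight t)"
    unfolding left_diff_distrib by (intro integral_diff integrable_mult_gweight assms)
  then show ?thesis by (simp add: moment_functional_def)
qed

lemma moment_functional_power: "moment_functional (\<lambda>t. t ^ k) = exp 1 * bcoef (k + 1)"
proof (cases k)
  case 0
  then show ?thesis
    using gweight_has_integral by (simp add: moment_functional_def integral_unique)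
next
  case (Suc j)
  have "integral {0..1} (\<lambda>t. t ^ k * gweight t) = integral {0..1} (\<lambda>t. gfun t * t ^ j)"
    by (rule integral_cong) (auto simp: Suc gweight_def gfun_def)
  also have "\<dots> = exp 1 * bcoef (j + 2)" using gfun_moment by (rule integral_unique)
  finally show ?thesis by (simp add: moment_functional_def Suc)
qed

lemma moment_functional_shifted_power:
  assumes "1 \<le> k"
  shows "moment_functional (\<lambda>t. (t - 1/12) ^ (k - 1)) = exp 1 * dcoef k"
proof (cases "k = 1")
  case True
  then show ?thesis using moment_functional_power[of 0] by (simp add: dcoef_def)
next
  case False
  define j where "j = k - 1"
  have "(12 * t - 1) ^ j = 12 ^ j * (t - 1/12) ^ j" for t :: real
  proof -
    have "(12 * t - 1) ^ j = (12 * (t - 1/12)) ^ j" by simp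
    then show ?thesis by (simp only: power_mult_distrib)
  qed
  then have "integral {0..1} (\<lambda>t. (12 * t - 1) ^ j / t * gfun t)
      = integral {0..1} (\<lambda>t. 12 ^ j * ((t - 1/12) ^ j * gweight t))"
    by (intro integral_cong) (simp add: gweight_def)
  also have "\<dots> = 12 ^ j * integral {0..1} (\<lambda>t. (t - 1/12) ^ j * gweight t)" by simp
  finally have I: "integral {0..1} (\<lambda>t. (12 * t - 1) ^ j / t * gfun t)
      = 12 ^ j * integral {0..1} (\<lambda>t. (t - 1/12) ^ j * gweight t)" .
  have "dcoef k = (1 / (12 ^ j * exp 1)) *
      ((-1) ^ j + integral {0..1} (\<lambda>t. (12 * t - 1) ^ j / t * gfun t))"
    using assms False by (simp add: dcoef_def j_def)
  then have "exp 1 * dcoef k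
      = (1 / 12 ^ j) * ((-1) ^ j + 12 ^ j * integral {0..1} (\<lambda>t. (t - 1/12) ^ j * gweight t))"
    unfolding I by simp
  also have "\<dots> = (-1) ^ j / 12 ^ j + integral {0..1} (\<lambda>t. (t - 1/12) ^ j * gweight t)"
    by (simp add: field_simps)
  also have "(-1) ^ j / 12 ^ j = (0 - 1/12 :: real) ^ j"
  proof -
    have "(0 - 1/12 :: real) = (-1) / 12" by simp
    then show ?thesis by (simp only: power_divide)
  qed
  finally show ?thesis by (simp add: moment_functional_def j_def)
qed

section \<open>Positivity of the functional on the difference of the partial sums\<close>

lemma sum_shifted_power_quotients:
  fixes t y c :: "'a :: field"
  assumes "y \<noteq> 0" "y \<noteq> c" "t \<noteq> y"
  shows "(\<Sum>k=1..m. (t - c) ^ (k - 1) / (y - c) ^ k - t ^ (k - 1) / y ^ k)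
       = ((t / y) ^ m - ((t - c) / (y - c)) ^ m) / (y - t)"
proof -
  have geometric: "(\<Sum>k=1..m. s ^ (k - 1) / w ^ k) = ((s / w) ^ m - 1) / (s - w)"
    if "w \<noteq> 0" "s \<noteq> w" for s w :: 'a
  proof -
    have "(\<Sum>k=1..m. s ^ (k - 1) / w ^ k) = (\<Sum>i<m. (s / w) ^ i / w)"
      using sum.atLeast1_atMost_eq[of "\<lambda>k. s ^ (k - 1) / w ^ k" m]
      by (simp add: power_divide mult.commute)
    also have "\<dots> = ((s / w) ^ m - 1) / ((s / w - 1) * w)"
      using that by (simp add: sum_divide_distrib[symmetric] geometric_sum divide_divide_eq_left)
    also have "(s / w - 1) * w = s - w" using that by (simp add: algebra_simps)
    finally show ?thesis .
  qed
  have "(\<Sum>k=1..m. (t - c) ^ (k - 1) / (y - c) ^ k - t ^ (k - 1) / y ^ k)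
      = (((t - c) / (y - c)) ^ m - 1) / (t - y) - ((t / y) ^ m - 1) / (t - y)"
    using geometric[of "y - c" "t - c"] geometric[of y t] assms by (simp add: sum_subtractf)
  also have "\<dots> = (((t - c) / (y - c)) ^ m - (t / y) ^ m) / (t - y)"
    by (simp add: diff_divide_distrib[symmetric])
  also have "\<dots> = ((t / y) ^ m - ((t - c) / (y - c)) ^ m) / (y - t)"
    by (metis minus_diff_eq minus_divide_divide)
  finally show ?thesis .
qed

text \<open>\<open>Qpoly y m t = (a^m - b^m) / (a - b)\<close> for \<open>a = t/y\<close>, \<open>b = (t - 1/12)/(y - 1/12)\<close>,
  written as a sum so that no division by \<open>a - b\<close> occurs.\<close>

definition Qpoly :: "real \<Rightarrow> nat \<Rightarrow> real \<Rightarrow> real" where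
  "Qpoly y m t = (\<Sum>i<m. ((t - 1/12) / (y - 1/12)) ^ (m - Suc i) * (t / y) ^ i)"

lemma power_diff_eq_Qpoly:
  "(t / y) ^ m - ((t - 1/12) / (y - 1/12)) ^ m = (t / y - (t - 1/12) / (y - 1/12)) * Qpoly y m t"
  by (simp add: power_diff_sumr2 Qpoly_def)

lemma quotient_minus_shifted_quotient:
  fixes t y :: real
  assumes "1 < y"
  shows "t / y - (t - 1/12) / (y - 1/12) = (y - t) / (12 * y * (y - 1/12))"
  using assms by (simp add: field_simps)

lemma sum_coefficient_quotients_eq_Qpoly:
  assumes "1 < y" "t < y"
  shows "(\<Sum>k=1..m. (t - 1/12) ^ (k - 1) / (y - 1/12) ^ k - t ^ (k - 1) / y ^ k)
       = Qpoly y m t / (12 * y * (y - 1/12))"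
proof -
  have "(\<Sum>k=1..m. (t - 1/12) ^ (k - 1) / (y - 1/12) ^ k - t ^ (k - 1) / y ^ k)
      = (t / y - (t - 1/12) / (y - 1/12)) * Qpoly y m t / (y - t)"
    using sum_shifted_power_quotients[of y "1/12" t m] assms by (simp add: power_diff_eq_Qpoly)
  also have "\<dots> = Qpoly y m t / (12 * y * (y - 1/12))"
    using assms by (simp add: quotient_minus_shifted_quotient)
  finally show ?thesis .
qed

lemma continuous_on_Qpoly: "1 < y \<Longrightarrow> continuous_on S (Qpoly y m)"
  unfolding Qpoly_def by (intro continuous_intros) auto

lemma Qpoly_at_0:
  assumes "1 \<le> m"
  shows "Qpoly y m 0 = (- (1/12) / (y - 1/12)) ^ (m - 1)"
proof -
  obtain m' where m: "m = Suc m'" using assms by (cases m) auto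
  show ?thesis unfolding Qpoly_def m by (subst sum.lessThan_Suc_shift) simp
qed

lemma moment_functional_Qpoly_pos_odd:
  assumes y: "1 < y" and m: "odd m"
  shows "0 < moment_functional (Qpoly y m)"
proof -
  have "0 \<le> Qpoly y m t" if t: "t \<in> {0..1}" for t
  proof -
    have pos: "0 < t / y - (t - 1/12) / (y - 1/12)" using y t by (simp add: quotient_minus_shifted_quotient)
    then have "((t - 1/12) / (y - 1/12)) ^ m \<le> (t / y) ^ m" by (intro power_mono_odd m) simp
    then have "0 \<le> (t / y - (t - 1/12) / (y - 1/12)) * Qpoly y m t"
      by (metis diff_ge_0_iff_ge power_diff_eq_Qpoly)
    then show ?thesis using pos by (simp add: zero_le_mult_iff)
  qed
  then have "0 \<le> integral {0..1} (\<lambda>t. Qpoly y m t * gweight t)"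
    by (intro integral_nonneg integrable_mult_gweight continuous_on_Qpoly y)
      (simp add: gweight_nonneg)
  moreover have "0 < Qpoly y m 0"
  proof -
    have m1: "1 \<le> m" using m by (cases m) auto
    then have "even (m - 1)" using m by simp
    moreover have "- (1/12) / (y - 1/12) \<noteq> (0::real)" using y by simp
    ultimately show ?thesis unfolding Qpoly_at_0[OF m1] by (simp add: zero_less_power_eq)
  qed
  ultimately show ?thesis by (simp add: moment_functional_def)
qed

lemma moment_functional_Qpoly_2:
  assumes y: "1 < y"
  shows "moment_functional (Qpoly y 2) = exp 1 / (24 * y)"
proof -
  define z where "z = y - 1/12"
  have z0: "0 < z" using y by (simp add: z_def)
  have "moment_functional (Qpoly y 2)
      = moment_functional (\<lambda>t. (1/z + 1/y) * t ^ 1 - (1/(12 * z)) * t ^ 0)"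
  proof (rule moment_functional_cong)
    fix t :: real
    have "Qpoly y 2 t = (t - 1/12) / (y - 1/12) + t / y" by (simp add: Qpoly_def numeral_2_eq_2)
    moreover have "(t - 1/12) / (y - 1/12) = t / z - 1 / (12 * z)"
      unfolding z_def by (simp add: diff_divide_distrib)
    ultimately show "Qpoly y 2 t = (1/z + 1/y) * t ^ 1 - (1/(12 * z)) * t ^ 0"
      by (simp add: distrib_right)
  qed
  also have "\<dots> = (1/z + 1/y) * (exp 1 * bcoef 2) - (1/(12 * z)) * (exp 1 * bcoef 1)"
    by (simp only: moment_functional_diff moment_functional_cmult moment_functional_power
        continuous_intros) (simp add: numeral_2_eq_2)
  also have "\<dots> = exp 1 / (24 * y)"
    using z0 y by (simp add: numeral_2_eq_2 bcoef.simps field_simps)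
  finally show ?thesis .
qed

lemma abs_Qpoly_le_near_0:
  assumes y: "1 < y" and t: "0 \<le> t" "t \<le> 1/12"
  shows "\<bar>Qpoly y m t\<bar> \<le> real m * ((1/12) / (y - 1/12)) ^ (m - 1)"
proof -
  define c :: real where "c = 1/12"
  define z where "z = y - c"
  have z0: "0 < z" and y0: "0 < y" and zy: "z \<le> y" using y by (simp_all add: z_def c_def)
  have "\<bar>(t - c) / z\<bar> = (c - t) / z" using t z0 by (simp add: abs_divide c_def)
  also have "\<dots> \<le> c / z" using t z0 by (intro divide_right_mono) auto
  finally have b: "\<bar>(t - c) / z\<bar> \<le> c / z" .
  have "\<bar>t / y\<bar> = t / y" using t y0 by simp
  also have "\<dots> \<le> c / y" using t y0 by (intro divide_right_mono) (auto simp: c_def)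
  also have "\<dots> \<le> c / z" using zy z0 by (simp add: c_def frac_le)
  finally have a: "\<bar>t / y\<bar> \<le> c / z" .
  have "\<bar>((t - c) / z) ^ (m - Suc i) * (t / y) ^ i\<bar> \<le> (c / z) ^ (m - 1)" if "i < m" for i
  proof -
    have "\<bar>((t - c) / z) ^ (m - Suc i) * (t / y) ^ i\<bar> \<le> (c / z) ^ (m - Suc i) * (c / z) ^ i"
      unfolding abs_mult power_abs by (intro mult_mono power_mono a b) (use z0 in \<open>auto simp: c_def\<close>)
    also have "\<dots> = (c / z) ^ (m - 1)" using that by (simp flip: power_add)
    finally show ?thesis .
  qed
  then have "(\<Sum>i<m. \<bar>((t - c) / z) ^ (m - Suc i) * (t / y) ^ i\<bar>) \<le> real m * (c / z) ^ (m - 1)"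
    using sum_mono[of "{..<m}" "\<lambda>i. \<bar>((t - c) / z) ^ (m - Suc i) * (t / y) ^ i\<bar>" "\<lambda>_. (c / z) ^ (m - 1)"]
    by simp
  moreover have "\<bar>Qpoly y m t\<bar> \<le> (\<Sum>i<m. \<bar>((t - c) / z) ^ (m - Suc i) * (t / y) ^ i\<bar>)"
    unfolding Qpoly_def z_def c_def by (rule sum_abs)
  ultimately show ?thesis by (simp only: z_def c_def)
qed

lemma Qpoly_ge_last_power:
  assumes y: "1 < y" and t: "1/12 \<le> t" and m: "1 \<le> m"
  shows "(t / y) ^ (m - 1) \<le> Qpoly y m t"
proof -
  have nonneg: "0 \<le> ((t - 1/12) / (y - 1/12)) ^ (m - Suc i) * (t / y) ^ i" for i
    using y t by simp
  have "((t - 1/12) / (y - 1/12)) ^ (m - Suc (m - 1)) * (t / y) ^ (m - 1) \<le> Qpoly y m t"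
    unfolding Qpoly_def by (rule member_le_sum) (use nonneg m in auto)
  then show ?thesis using m by simp
qed

text \<open>In units of \<open>(1/(2y))^(m-1)\<close>, the negative part of \<open>Qpoly y m\<close> on \<open>[0, 1/12]\<close>
  (including the point mass at \<open>0\<close>) is at most \<open>(1 + m/12) (y/(6(y - 1/12)))^(m-1)\<close>, while
  \<open>g(t)/t \<ge> 7/160\<close> on \<open>[1/2, 3/4]\<close> contributes \<open>7/640\<close>.\<close>

lemma negative_part_estimate:
  assumes y: "1 < y" and m: "4 \<le> m"
  shows "(1 + real m / 12) * (y / (6 * (y - 1/12))) ^ (m - 1) < 7/640"
proof -
  define r where "r = y / (6 * (y - 1/12))"
  have r0: "0 \<le> r" and r1: "r \<le> 2/11" using y by (simp_all add: r_def field_simps)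
  have "1 + real m / 12 \<le> (13/12) ^ m"
    using Bernoulli_inequality[of "1/12::real" m] by simp
  moreover have "r ^ (m - 1) \<le> (2/11) ^ (m - 1)" by (rule power_mono[OF r1 r0])
  ultimately have "(1 + real m / 12) * r ^ (m - 1) \<le> (13/12) ^ m * (2/11) ^ (m - 1)"
    by (rule mult_mono) (use r0 in auto)
  also have "(13/12::real) ^ m * (2/11) ^ (m - 1) = (13/12) * (13/66) ^ (m - 1)"
  proof -
    have "m = Suc (m - 1)" using m by simp
    then have "(13/12::real) ^ m = (13/12) * (13/12) ^ (m - 1)" by (metis power_Suc)
    moreover have "(13/12::real) ^ (m - 1) * (2/11) ^ (m - 1) = (13/66) ^ (m - 1)"
      by (simp flip: power_mult_distrib)
    ultimately show ?thesis by (simp only: mult.assoc)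
  qed
  also have "\<dots> \<le> (13/12) * (13/66) ^ 3"
    by (intro mult_left_mono power_decreasing) (use m in auto)
  also have "\<dots> < 7/640" by (simp add: power3_eq_cube)
  finally show ?thesis by (simp add: r_def)
qed

lemma Qpoly_mult_gweight_ge_step:
  assumes y: "1 < y" and m: "1 \<le> m" and t: "t \<in> {0..1}"
  shows "(if t \<in> {0..1/12} then - (real m * ((1/12) / (y - 1/12)) ^ (m - 1)) else 0)
       + (if t \<in> {1/2..3/4} then (7/160) * (1 / (2 * y)) ^ (m - 1) else 0)
       \<le> Qpoly y m t * gweight t"
proof (cases "t \<le> 1/12")
  case True
  have "\<bar>Qpoly y m t\<bar> \<le> real m * ((1/12) / (y - 1/12)) ^ (m - 1)"
    using abs_Qpoly_le_near_0[OF y] t True by simp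
  moreover have g: "0 \<le> gweight t" "gweight t \<le> 1" using gweight_nonneg gweight_le_1 t by auto
  ultimately have "- (real m * ((1/12) / (y - 1/12)) ^ (m - 1)) \<le> - \<bar>Qpoly y m t\<bar>" by simp
  also have "\<dots> \<le> - \<bar>Qpoly y m t\<bar> * gweight t" using g by (simp add: mult_left_le)
  also have "\<dots> \<le> Qpoly y m t * gweight t" using g by (simp add: mult_right_mono abs_if)
  finally show ?thesis using True t by simp
next
  case False
  have y0: "0 < y" using y by simp
  have q: "(t / y) ^ (m - 1) \<le> Qpoly y m t" using Qpoly_ge_last_power[OF y] False m by simp
  moreover have "0 \<le> (t / y) ^ (m - 1)" using t y0 by simp
  ultimately have q0: "0 \<le> Qpoly y m t" by linarith
  show ?thesis
  proof (cases "t \<in> {1/2..3/4}")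
    case True
    have "(1 / (2 * y)) ^ (m - 1) \<le> (t / y) ^ (m - 1)"
      using True y0 by (intro power_mono) (auto simp: field_simps)
    with q have "(1 / (2 * y)) ^ (m - 1) \<le> Qpoly y m t" by linarith
    then have "(1 / (2 * y)) ^ (m - 1) * (7/160) \<le> Qpoly y m t * gweight t"
      using True gweight_ge[of t] by (intro mult_mono) (use q0 in auto)
    then show ?thesis using True False by (simp add: mult.commute)
  next
    case outside: False
    have "t \<notin> {0..1/12}" using False by simp
    then show ?thesis
      using outside q0 gweight_nonneg[of t] by (simp del: atLeastAtMost_iff)
  qed
qed

lemma moment_functional_Qpoly_pos_even:
  assumes y: "1 < y" and m: "even m" "4 \<le> m"
  shows "0 < moment_functional (Qpoly y m)"
proof -
  define \<alpha> where "\<alpha> = real m * ((1/12) / (y - 1/12)) ^ (m - 1)"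
  define \<beta> where "\<beta> = (7/160) * (1 / (2 * y)) ^ (m - 1)"
  have step: "((\<lambda>t. if t \<in> {a..b} then v else 0) has_integral ((b - a) * v)) {0..1}"
    if "0 \<le> a" "a \<le> b" "b \<le> 1" for a b v :: real
    using has_integral_restrict_closed_subinterval[OF has_integral_const_real[of v a b, folded cbox_interval],
        of 0 1] that
    by (simp add: cbox_interval)
  have "((\<lambda>t::real. (if t \<in> {0..1/12} then - \<alpha> else 0) + (if t \<in> {1/2..3/4} then \<beta> else 0))
      has_integral (- \<alpha> / 12 + \<beta> / 4)) {0..1}"
    using has_integral_add[OF step[of 0 "1/12" "- \<alpha>"] step[of "1/2" "3/4" \<beta>]] by simp
  then have "- \<alpha> / 12 + \<beta> / 4 \<le> integral {0..1} (\<lambda>t. Qpoly y m t * gweight t)"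
    using Qpoly_mult_gweight_ge_step[OF y] m unfolding \<alpha>_def \<beta>_def
    by (intro has_integral_le[OF _ integrable_integral[OF integrable_mult_gweight[OF continuous_on_Qpoly[OF y]]]])
      auto
  moreover have "Qpoly y m 0 = - (((1/12) / (y - 1/12)) ^ (m - 1))"
    using m Qpoly_at_0[of m y] by (simp add: power_minus_odd)
  moreover
  define v where "v = (1 / (2 * y)) ^ (m - 1)"
  define r where "r = y / (6 * (y - 1/12))"
  have "(1/12) / (y - 1/12) = (1 / (2 * y)) * r" using y by (simp add: r_def field_simps)
  then have w: "((1/12) / (y - 1/12)) ^ (m - 1) = v * r ^ (m - 1)"
    unfolding v_def by (simp only: power_mult_distrib)
  have "- (((1/12) / (y - 1/12)) ^ (m - 1)) + (- \<alpha> / 12 + \<beta> / 4)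
      = v * (7/640 - (1 + real m / 12) * r ^ (m - 1))"
    unfolding \<alpha>_def \<beta>_def w by (simp add: v_def algebra_simps)
  moreover have "0 < v * (7/640 - (1 + real m / 12) * r ^ (m - 1))"
    using negative_part_estimate[OF y m(2)] y by (simp add: v_def r_def)
  ultimately show ?thesis unfolding moment_functional_def by linarith
qed

lemma moment_functional_Qpoly_pos:
  assumes "1 < y" "1 \<le> m"
  shows "0 < moment_functional (Qpoly y m)"
proof -
  have "odd m \<or> m = 2 \<or> (even m \<and> 4 \<le> m)" using assms(2) by presburger
  then show ?thesis
  proof (elim disjE conjE)
    show "odd m \<Longrightarrow> ?thesis" by (rule moment_functional_Qpoly_pos_odd[OF assms(1)])
    show "m = 2 \<Longrightarrow> ?thesis" using assms(1) by (simp add: moment_functional_Qpoly_2)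
    show "even m \<Longrightarrow> 4 \<le> m \<Longrightarrow> ?thesis" by (rule moment_functional_Qpoly_pos_even[OF assms(1)])
  qed
qed

lemma moment_functional_coefficient_sums:
  assumes y: "1 < y"
  shows "moment_functional (\<lambda>t. \<Sum>k=1..m. (t - 1/12) ^ (k - 1) / (y - 1/12) ^ k - t ^ (k - 1) / y ^ k)
       = exp 1 * (\<Sum>k=1..m. dcoef k / (y - 1/12) ^ k - bcoef k / y ^ k)"
proof -
  have "moment_functional (\<lambda>t. (t - 1/12) ^ (k - 1) / (y - 1/12) ^ k - t ^ (k - 1) / y ^ k)
      = exp 1 * (dcoef k / (y - 1/12) ^ k - bcoef k / y ^ k)" if "k \<in> {1..m}" for k
  proof -
    have "continuous_on {0..1} (\<lambda>t. (t - 1/12) ^ (k - 1) / (y - 1/12) ^ k)"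
      "continuous_on {0..1} (\<lambda>t. t ^ (k - 1) / y ^ k)"
      using y by (auto intro!: continuous_intros)
    then have "moment_functional (\<lambda>t. (t - 1/12) ^ (k - 1) / (y - 1/12) ^ k - t ^ (k - 1) / y ^ k)
        = moment_functional (\<lambda>t. (t - 1/12) ^ (k - 1)) / (y - 1/12) ^ k
          - moment_functional (\<lambda>t. t ^ (k - 1)) / y ^ k"
      by (simp only: moment_functional_diff moment_functional_divide)
    also have "\<dots> = exp 1 * dcoef k / (y - 1/12) ^ k - exp 1 * bcoef k / y ^ k"
      using moment_functional_shifted_power[of k] moment_functional_power[of "k - 1"] that by simp
    finally show ?thesis by (simp add: right_diff_distrib)
  qed
  then have "moment_functional (\<lambda>t. \<Sum>k=1..m. (t - 1/12) ^ (k - 1) / (y - 1/12) ^ k - t ^ (k - 1) / y ^ k)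
      = (\<Sum>k=1..m. exp 1 * (dcoef k / (y - 1/12) ^ k - bcoef k / y ^ k))"
    by (subst moment_functional_sum) (use y in \<open>auto intro!: continuous_intros\<close>)
  then show ?thesis by (simp add: sum_distrib_left)
qed

theorem theorem2:
  fixes x :: real and m :: nat
  assumes "x > 0" and "m \<ge> 1"
  shows "(\<Sum>k=1..m. dcoef k / (x + 11/12) ^ k) > (\<Sum>k=1..m. bcoef k / (1 + x) ^ k)"
proof -
  define y where "y = 1 + x"
  have y: "1 < y" using assms(1) by (simp add: y_def)
  have "0 < moment_functional (Qpoly y m) / (12 * y * (y - 1/12))"
    using moment_functional_Qpoly_pos[OF y assms(2)] y by simp
  also have "\<dots> = moment_functional (\<lambda>t. Qpoly y m t / (12 * y * (y - 1/12)))"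
    by (rule moment_functional_divide[symmetric])
  also have "\<dots> = moment_functional
      (\<lambda>t. \<Sum>k=1..m. (t - 1/12) ^ (k - 1) / (y - 1/12) ^ k - t ^ (k - 1) / y ^ k)"
  proof (rule moment_functional_cong)
    fix t :: real assume "t \<in> {0..1}"
    then have "t < y" using y by simp
    show "Qpoly y m t / (12 * y * (y - 1/12))
        = (\<Sum>k=1..m. (t - 1/12) ^ (k - 1) / (y - 1/12) ^ k - t ^ (k - 1) / y ^ k)"
      by (rule sum_coefficient_quotients_eq_Qpoly[OF y \<open>t < y\<close>, symmetric])
  qed
  also have "\<dots> = exp 1 * (\<Sum>k=1..m. dcoef k / (y - 1/12) ^ k - bcoef k / y ^ k)"
    by (rule moment_functional_coefficient_sums[OF y])
  also have "y - 1/12 = x + 11/12" by (simp add: y_def)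
  finally show ?thesis by (simp add: y_def sum_subtractf zero_less_mult_iff)
qed

end
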